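(* Let $W$ be a finite set of possible worlds, let $G=(2^W,\gg)$ be a belief algebra on $W$, let $\Omega\subseteq\gg$, and let $\mathcal{A}$ be the set of all belief algebras on $W$ that contain $\Omega$. Then $\operatorname{Gen}(\Omega)$ is a belief algebra, and $\operatorname{Gen}(\Omega)=\bigcap\mathcal{A}$.
   Context: $R_W=\{(U,V)\mid U,V\subseteq W,\ U\cap V=\varnothing\}$. A belief algebra on $W$ is a pair $(2^W,\gg)$, $\gg$ a binary relation on $2^W$, such that for all $U,V,U_1,V_1,U_2,V_2\subseteq W$: (A0) $\gg\subseteq R_W$; (A1) $U\gg\varnothing$ iff $U\neq\varnothing$; (A2) if $U\gg V$ then not $V\gg U$; (A3) if $U_1\supseteq U$, $U\gg V$, $V\supseteq V_1$ and $U_1\cap V_1=\varnothing$, then $U_1\gg V_1$; (A4) if $U=U_1\cup V_1=U_2\cup V_2$, $U_1\gg V_1$ and $U_2\gg V_2$, then $U_1\cap U_2\gg V_1\cup V_2$. A belief algebra is identified with its relation $\gg$ as a set of pairs; "contains $\Omega$" means $\Omega\subseteq\gg$, and $\bigcap\mathcal{A}$ is the intersection of these sets of pairs. For $\Omega\subseteq R_W$, $\operatorname{Gen}(\Omega)$ is the smallest subset of $R_W$ that contains $\Omega$, contains $(U,\varnothing)$ for every nonempty $U\subseteq W$, and is closed under: if $(U,V)$ is in it, $U\subseteq U_1$, $V_1\subseteq V$ and $U_1\cap V_1=\varnothing$, then $(U_1,V_1)$ is in it; if $U_1\cup V_1=U_2\cup V_2$ and $(U_1,V_1),(U_2,V_2)$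 are in it, then $(U_1\cap U_2,V_1\cup V_2)$ is in it. *)

theory Defs
  imports Main
begin

definition RW :: "'a set \<Rightarrow> ('a set \<times> 'a set) set" where
  "RW W = {(U, V). U \<subseteq> W \<and> V \<subseteq> W \<and> U \<inter> V = {}}"

definition belief_algebra :: "'a set \<Rightarrow> ('a set \<times> 'a set) set \<Rightarrow> bool" where
  "belief_algebra W R \<longleftrightarrow>
     R \<subseteq> RW W \<and>
     (\<forall>U. U \<subseteq> W \<longrightarrow> ((U, {}) \<in> R \<longleftrightarrow> U \<noteq> {})) \<and>
     (\<forall>U V. U \<subseteq> W \<longrightarrow> V \<subseteq> W \<longrightarrow> (U, V) \<in> R \<longrightarrow> (V, U) \<notin> R) \<and>
     (\<forall>U V U1 V1. U \<subseteq> W \<longrightarrow> V \<subseteq> W \<longrightarrow> U1 \<subseteq> W \<longrightarrow> V1 \<subseteq> W \<longrightarrow>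
        U \<subseteq> U1 \<longrightarrow> (U, V) \<in> R \<longrightarrow> V1 \<subseteq> V \<longrightarrow> U1 \<inter> V1 = {} \<longrightarrow> (U1, V1) \<in> R) \<and>
     (\<forall>U U1 V1 U2 V2. U \<subseteq> W \<longrightarrow> U1 \<subseteq> W \<longrightarrow> V1 \<subseteq> W \<longrightarrow> U2 \<subseteq> W \<longrightarrow> V2 \<subseteq> W \<longrightarrow>
        U = U1 \<union> V1 \<longrightarrow> U = U2 \<union> V2 \<longrightarrow> (U1, V1) \<in> R \<longrightarrow> (U2, V2) \<in> R \<longrightarrow>
        (U1 \<inter> U2, V1 \<union> V2) \<in> R)"

inductive_set Gen :: "'a set \<Rightarrow> ('a set \<times> 'a set) set \<Rightarrow> ('a set \<times> 'a set) set"
  for W :: "'a set" and \<Omega> :: "('a set \<times> 'a set) set" where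
  base: "p \<in> \<Omega> \<Longrightarrow> p \<in> RW W \<Longrightarrow> p \<in> Gen W \<Omega>"
| empty: "U \<subseteq> W \<Longrightarrow> U \<noteq> {} \<Longrightarrow> (U, {}) \<in> Gen W \<Omega>"
| mono: "(U, V) \<in> Gen W \<Omega> \<Longrightarrow> U \<subseteq> U1 \<Longrightarrow> U1 \<subseteq> W \<Longrightarrow> V1 \<subseteq> V \<Longrightarrow> U1 \<inter> V1 = {}
          \<Longrightarrow> (U1, V1) \<in> Gen W \<Omega>"
| inter: "U1 \<union> V1 = U2 \<union> V2 \<Longrightarrow> (U1, V1) \<in> Gen W \<Omega> \<Longrightarrow> (U2, V2) \<in> Gen W \<Omega>
          \<Longrightarrow> (U1 \<inter> U2, V1 \<union> V2) \<in> Gen W \<Omega>"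

end

theory Submission
  imports Defs
begin

text \<open>Besides the inclusion of \<open>\<Omega>\<close>, each rule generating \<open>Gen W \<Omega>\<close> is an instance of
  (A1), (A3) or (A4), so \<open>Gen W \<Omega>\<close> lies inside every belief algebra containing \<open>\<Omega>\<close>.
  Conversely, \<open>Gen W \<Omega>\<close> satisfies (A0), (A3), (A4) and one half of (A1) by construction, and
  it inherits (A2) and the other half of (A1) from the given belief algebra \<open>G \<supseteq> \<Omega>\<close>, being a
  subset of it.\<close>

lemma belief_algebra_subset_RW: "belief_algebra W R \<Longrightarrow> R \<subseteq> RW W"
  unfolding belief_algebra_def by (elim conjE)

lemma belief_algebra_memD:
  assumes "belief_algebra W R" "(U, V) \<in> R"
  shows "U \<subseteq> W" "V \<subseteq> W" "U \<inter> V = {}"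
  using belief_algebra_subset_RW[OF assms(1)] assms(2) by (auto simp: RW_def)

lemma belief_algebra_empty_right_iff:
  assumes "belief_algebra W R"
  shows "(U, {}) \<in> R \<longleftrightarrow> U \<subseteq> W \<and> U \<noteq> {}"
  using assms belief_algebra_memD[OF assms, of U "{}"] unfolding belief_algebra_def
  by (elim conjE) blast

lemma belief_algebra_asym:
  assumes "belief_algebra W R" "(U, V) \<in> R"
  shows "(V, U) \<notin> R"
  using assms belief_algebra_memD[OF assms] unfolding belief_algebra_def
  by (elim conjE) blast

lemma belief_algebra_mono:
  assumes "belief_algebra W R" "(U, V) \<in> R" "U \<subseteq> U1" "U1 \<subseteq> W" "V1 \<subseteq> V" "U1 \<inter> V1 = {}"
  shows "(U1, V1) \<in> R"
proof -
  have "U \<subseteq> W" "V \<subseteq> W" "V1 \<subseteq> W"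
    using belief_algebra_memD[OF assms(1,2)] assms(5) by auto
  with assms show ?thesis unfolding belief_algebra_def by (elim conjE) metis
qed

lemma belief_algebra_inter:
  assumes "belief_algebra W R" "U1 \<union> V1 = U2 \<union> V2" "(U1, V1) \<in> R" "(U2, V2) \<in> R"
  shows "(U1 \<inter> U2, V1 \<union> V2) \<in> R"
proof -
  have "U1 \<union> V1 \<subseteq> W" "U1 \<subseteq> W" "V1 \<subseteq> W" "U2 \<subseteq> W" "V2 \<subseteq> W"
    using belief_algebra_memD[OF assms(1,3)] belief_algebra_memD[OF assms(1,4)] by auto
  with assms show ?thesis unfolding belief_algebra_def by (elim conjE) metis
qed

lemma belief_algebraI:
  assumes "R \<subseteq> RW W"
    and "\<And>U. U \<subseteq> W \<Longrightarrow> U \<noteq> {} \<Longrightarrow> (U, {}) \<in> R"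
    and "({}, {}) \<notin> R"
    and "\<And>U V. (U, V) \<in> R \<Longrightarrow> (V, U) \<notin> R"
    and "\<And>U V U1 V1. (U, V) \<in> R \<Longrightarrow> U \<subseteq> U1 \<Longrightarrow> U1 \<subseteq> W \<Longrightarrow> V1 \<subseteq> V \<Longrightarrow> U1 \<inter> V1 = {}
      \<Longrightarrow> (U1, V1) \<in> R"
    and "\<And>U1 V1 U2 V2. U1 \<union> V1 = U2 \<union> V2 \<Longrightarrow> (U1, V1) \<in> R \<Longrightarrow> (U2, V2) \<in> R
      \<Longrightarrow> (U1 \<inter> U2, V1 \<union> V2) \<in> R"
  shows "belief_algebra W R"
  unfolding belief_algebra_def using assms by (intro conjI allI impI iffI; metis)

lemma Gen_subset_RW: "Gen W \<Omega> \<subseteq> RW W"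
proof
  show "p \<in> RW W" if "p \<in> Gen W \<Omega>" for p
    using that by induction (auto simp: RW_def)
qed

lemma subset_Gen: "\<Omega> \<subseteq> RW W \<Longrightarrow> \<Omega> \<subseteq> Gen W \<Omega>"
  by (auto intro: Gen.base)

lemma Gen_least:
  assumes R: "belief_algebra W R" and "\<Omega> \<subseteq> R"
  shows "Gen W \<Omega> \<subseteq> R"
proof
  show "p \<in> R" if "p \<in> Gen W \<Omega>" for p
    using that
  proof induction
    case (base p)
    then show ?case using \<open>\<Omega> \<subseteq> R\<close> by blast
  next
    case (empty U)
    then show ?case using belief_algebra_empty_right_iff[OF R] by blast
  next
    case (mono U V U1 V1)
    then show ?case using belief_algebra_mono[OF R] by blast
  next
    case (inter U1 V1 U2 V2)
    then show ?case using belief_algebra_inter[OF R] by blast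
  qed
qed

lemma belief_algebra_Gen:
  assumes G: "belief_algebra W G" and "\<Omega> \<subseteq> G"
  shows "belief_algebra W (Gen W \<Omega>)"
proof (rule belief_algebraI)
  have Gen_G: "Gen W \<Omega> \<subseteq> G"
    using Gen_least[OF assms] .
  show "({}, {}) \<notin> Gen W \<Omega>"
    using Gen_G belief_algebra_empty_right_iff[OF G] by blast
  show "(V, U) \<notin> Gen W \<Omega>" if "(U, V) \<in> Gen W \<Omega>" for U V
    using that Gen_G belief_algebra_asym[OF G] by blast
qed (rule Gen_subset_RW Gen.empty Gen.mono Gen.inter; assumption)+

theorem corollary2:
  fixes W :: "'a set" and G \<Omega> :: "('a set \<times> 'a set) set"
  assumes "finite W"
    and "belief_algebra W G"
    and "\<Omega> \<subseteq> G"
  shows "belief_algebra W (Gen W \<Omega>)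
     \<and> Gen W \<Omega> = \<Inter> {R. belief_algebra W R \<and> \<Omega> \<subseteq> R}"
proof
  show Gen_belief_algebra: "belief_algebra W (Gen W \<Omega>)"
    using belief_algebra_Gen[OF assms(2,3)] .
  have "\<Omega> \<subseteq> Gen W \<Omega>"
    using subset_Gen belief_algebra_subset_RW[OF assms(2)] assms(3) by blast
  then show "Gen W \<Omega> = \<Inter> {R. belief_algebra W R \<and> \<Omega> \<subseteq> R}"
    using Gen_belief_algebra by (auto intro: Gen_least[THEN subsetD])
qed

end
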